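(* Let $f\colon\mathbb{R}\to\mathbb{R}$ be a smooth $T$-periodic function ($T>0$). Then the equation $$\ddot x=f(t)\sin x-\cos x$$ has a $T$-periodic solution $x(t)$ such that $0<x(t)<\pi$ for all $t$.
   Context: The equation describes an inverted pendulum with a horizontally moving pivot point in a constant gravity field. *)

theory Defs
  imports "HOL-Analysis.Analysis"
begin

definition smooth_fun :: "(real \<Rightarrow> real) \<Rightarrow> bool" where
  "smooth_fun f \<longleftrightarrow> (\<forall>n. \<forall>t. ((deriv ^^ n) f) differentiable (at t))"

end

theory Submission
  imports Defs "HOL-Library.Periodic_Fun"
begin

text \<open>
  Write the equation as \<open>x'' = w\<^sup>2 x - F(t, x)\<close> with
  \<open>F(t, y) = w\<^sup>2 y - (f(t) sin y - cos y)\<close>; for \<open>w\<^sup>2 \<ge> |f| + 1\<close> this \<open>F\<close> is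
  nondecreasing in \<open>y\<close>. The \<open>T\<close>-periodic solutions are the fixed points of
  \<open>x \<mapsto> G(F(\<cdot>, x))\<close>, where \<open>G\<close> is the (positive, hence order preserving) periodic
  Green operator of \<open>x'' - w\<^sup>2 x\<close>. If \<open>|f| tan \<epsilon> \<le> 1\<close>, the constants \<open>\<epsilon>\<close> and
  \<open>\<pi> - \<epsilon>\<close> are a lower and an upper solution, so iterating from \<open>\<epsilon>\<close> gives an
  increasing sequence bounded by \<open>\<pi> - \<epsilon>\<close>. Its limit is continuous because all iterates
  share a Lipschitz constant, and it is a fixed point by dominated convergence.
\<close>

section \<open>The periodic Green operator of \<open>x'' - w\<^sup>2 x\<close>\<close>

lemma has_real_derivative_integral_window:
  fixes k :: "real \<Rightarrow> real"
  assumes k: "continuous_on UNIV k" and T: "T \<ge> 0"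
  shows "((\<lambda>t. integral {t - T..t} k) has_real_derivative (k t - k (t - T))) (at t)"
proof -
  define a where "a = t - T - 1"
  have D: "((\<lambda>x. integral {a..x} k) has_real_derivative k y) (at y)" if "a < y" for y
  proof -
    have "((\<lambda>x. integral {a..x} k) has_real_derivative k y) (at y within {a..y + 1})"
      by (rule integral_has_real_derivative) (use k that in \<open>auto intro: continuous_on_subset\<close>)
    moreover have "at y within {a..y + 1} = at y"
      by (rule at_within_interior) (use that in simp)
    ultimately show ?thesis by simp
  qed
  have "((\<lambda>x. integral {a..x} k - integral {a..x - T} k) has_real_derivative (k t - k (t - T) * 1)) (at t)"
    by (intro DERIV_diff D DERIV_chain2[OF D] derivative_eq_intros) (use T in \<open>auto simp: a_def\<close>)
  then have "((\<lambda>x. integral {a..x} k - integral {a..x - T} k) has_real_derivative (k t - k (t - T))) (at t)"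
    by simp
  then show ?thesis
  proof (rule has_field_derivative_transform_within_open[of _ _ _ "{t - 1<..}"], simp_all)
    fix z assume z: "t - 1 < z"
    have "integral {a..z - T} k + integral {z - T..z} k = integral {a..z} k"
      by (rule Henstock_Kurzweil_Integration.integral_combine) (use z T in \<open>auto simp: a_def intro!: integrable_continuous_real continuous_on_subset[OF k]\<close>)
    then show "integral {a..z} k - integral {a..z - T} k = integral {z - T..z} k" by simp
  qed
qed

definition exp_window :: "real \<Rightarrow> real \<Rightarrow> (real \<Rightarrow> real) \<Rightarrow> real \<Rightarrow> real" where
  "exp_window w T h t = exp (- w * t) * integral {t - T..t} (\<lambda>u. exp (w * u) * h u)"

lemma has_real_derivative_exp_window:
  assumes h: "continuous_on UNIV h" and per: "\<And>t. h (t + T) = h t" and T: "T \<ge> 0"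
  shows "(exp_window w T h has_real_derivative (- w * exp_window w T h t + (1 - exp (- w * T)) * h t)) (at t)"
proof -
  let ?I = "\<lambda>t. integral {t - T..t} (\<lambda>u. exp (w * u) * h u)"
  have "((\<lambda>t. exp (- w * t) * ?I t) has_real_derivative
      (- w * exp (- w * t)) * ?I t + (exp (w * t) * h t - exp (w * (t - T)) * h (t - T)) * exp (- w * t)) (at t)"
    by (intro DERIV_mult has_real_derivative_integral_window continuous_intros h T)
       (auto intro!: derivative_eq_intros)
  moreover have "h (t - T) = h t"
    using per[of "t - T"] by simp
  moreover have "exp (- w * t) * exp (w * t) = 1" "exp (- w * t) * exp (w * (t - T)) = exp (- w * T)"
    by (simp_all add: exp_add[symmetric] algebra_simps)
  ultimately show ?thesis
    unfolding exp_window_def[abs_def] by (simp add: algebra_simps)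
qed

lemma exp_window_periodic:
  assumes per: "\<And>t. h (t + T) = h t"
  shows "exp_window w T h (t + T) = exp_window w T h t"
proof -
  let ?k = "\<lambda>u. exp (w * u) * h u"
  have "integral {t..t + T} ?k = integral {t - T..t} (?k \<circ> (+) T)"
    using integral_shift_Icc_real[of "t - T" t ?k T] by simp
  also have "\<dots> = integral {t - T..t} (\<lambda>u. exp (w * T) * ?k u)"
    by (rule integral_cong) (simp add: per[of u for u] add.commute distrib_left exp_add)
  finally have "integral {t..t + T} ?k = exp (w * T) * integral {t - T..t} ?k"
    by simp
  moreover have "exp (- w * (t + T)) * exp (w * T) = exp (- w * t)"
    by (simp add: exp_add[symmetric] algebra_simps)
  ultimately show ?thesis
    unfolding exp_window_def by (simp add: mult.assoc[symmetric])
qed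

lemma exp_window_mono:
  assumes "continuous_on UNIV h" "continuous_on UNIV g" "\<And>u. h u \<le> g u"
  shows "exp_window w T h t \<le> exp_window w T g t"
  unfolding exp_window_def
  by (intro mult_left_mono integral_le integrable_continuous_real continuous_intros assms
      continuous_on_subset[of UNIV]) auto

lemma exp_window_const:
  assumes "T \<ge> 0" "w \<noteq> 0"
  shows "exp_window w T (\<lambda>_. a) t = a * (1 - exp (- w * T)) / w"
proof -
  have "((\<lambda>u. exp (w * u) * a) has_integral (exp (w * t) * a / w - exp (w * (t - T)) * a / w)) {t - T..t}"
    by (rule fundamental_theorem_of_calculus)
       (use assms in \<open>auto intro!: derivative_eq_intros simp: has_real_derivative_iff_has_vector_derivative[symmetric]\<close>)
  then have I: "integral {t - T..t} (\<lambda>u. exp (w * u) * a) = exp (w * t) * a / w - exp (w * (t - T)) * a / w"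
    by (rule integral_unique)
  have "exp (- w * t) * exp (w * t) = 1" "exp (- w * t) * exp (w * (t - T)) = exp (- w * T)"
    by (simp_all add: exp_add[symmetric] algebra_simps)
  then show ?thesis
    unfolding exp_window_def I
    by (simp only: right_diff_distrib times_divide_eq_right mult.assoc[symmetric]) (use assms(2) in \<open>simp add: field_simps\<close>)
qed

lemma tendsto_exp_window:
  assumes "\<And>n. continuous_on UNIV (h n)" and "\<And>n u. \<bar>h n u\<bar> \<le> H"
    and "\<And>u. (\<lambda>n. h n u) \<longlonglongrightarrow> g u"
  shows "(\<lambda>n. exp_window w T (h n) t) \<longlonglongrightarrow> exp_window w T g t"
  unfolding exp_window_def
proof (intro tendsto_mult_left dominated_convergence(2)[where h="\<lambda>u. exp (w * u) * H"])
  show "(\<lambda>u. exp (w * u) * h n u) integrable_on {t - T..t}" for n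
    by (intro integrable_continuous_real continuous_intros assms continuous_on_subset[of UNIV]) auto
  show "(\<lambda>u. exp (w * u) * H) integrable_on {t - T..t}"
    by (intro integrable_continuous_real continuous_intros)
  show "norm (exp (w * u) * h n u) \<le> exp (w * u) * H" for n u
    using assms(2)[of n u] by (simp add: abs_mult)
qed (auto intro: tendsto_mult_left assms(3))

text \<open>
  \<open>periodic_green w T h\<close> is the \<open>T\<close>-periodic solution of \<open>x'' = w\<^sup>2 x - h\<close>. Up to
  normalisation it adds the integrals of \<open>exp (- w \<bar>t - u\<bar>) h u\<close> over \<open>[t - T, t]\<close> and over
  \<open>[t, t + T]\<close>; the second is the first one for the reflected data \<open>u \<mapsto> h (- u)\<close> at \<open>- t\<close>.
\<close>

definition periodic_green :: "real \<Rightarrow> real \<Rightarrow> (real \<Rightarrow> real) \<Rightarrow> real \<Rightarrow> real" where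
  "periodic_green w T h t =
     (exp_window w T h t + exp_window w T (\<lambda>u. h (- u)) (- t)) / (2 * w * (1 - exp (- w * T)))"

definition periodic_green_deriv :: "real \<Rightarrow> real \<Rightarrow> (real \<Rightarrow> real) \<Rightarrow> real \<Rightarrow> real" where
  "periodic_green_deriv w T h t =
     (exp_window w T (\<lambda>u. h (- u)) (- t) - exp_window w T h t) / (2 * (1 - exp (- w * T)))"

lemma periodic_reflect:
  fixes h :: "real \<Rightarrow> 'a"
  assumes "\<And>t. h (t + T) = h t"
  shows "h (- t - T) = h (- t)"
  using assms[of "- t - T"] by simp

lemma continuous_on_reflect:
  fixes h :: "real \<Rightarrow> 'a::topological_space"
  assumes "continuous_on UNIV h"
  shows "continuous_on UNIV (\<lambda>u. h (- u))"
  using continuous_on_compose2[OF assms continuous_on_minus[OF continuous_on_id]] by simp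

context
  fixes w T :: real
  assumes w_pos: "0 < w" and T_pos: "0 < T"
begin

lemma has_real_derivative_periodic_green:
  assumes h: "continuous_on UNIV h" and per: "\<And>t. h (t + T) = h t"
  shows "(periodic_green w T h has_real_derivative periodic_green_deriv w T h t) (at t)"
    and "(periodic_green_deriv w T h has_real_derivative (w\<^sup>2 * periodic_green w T h t - h t)) (at t)"
proof -
  define c where "c = 1 - exp (- w * T)"
  have c: "c > 0"
    using w_pos T_pos by (simp add: c_def)
  let ?U = "exp_window w T h" and ?V = "\<lambda>t. exp_window w T (\<lambda>u. h (- u)) (- t)"
  have dU: "(?U has_real_derivative (- w * ?U t + c * h t)) (at t)"
    unfolding c_def by (rule has_real_derivative_exp_window[OF h per]) (use T_pos in simp)
  have "(exp_window w T (\<lambda>u. h (- u)) has_real_derivative (- w * ?V t + c * h (- (- t)))) (at (- t))"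
    unfolding c_def
    by (rule has_real_derivative_exp_window)
       (use T_pos periodic_reflect[of h T, OF per] continuous_on_reflect[OF h] in auto)
  then have dV: "(?V has_real_derivative (w * ?V t - c * h t)) (at t)"
    by (simp add: DERIV_mirror)
  have green: "periodic_green w T h = (\<lambda>t. (?U t + ?V t) / (2 * w * c))"
    and green_deriv: "periodic_green_deriv w T h = (\<lambda>t. (?V t - ?U t) / (2 * c))"
    by (simp_all add: periodic_green_def periodic_green_deriv_def c_def fun_eq_iff)
  have "(periodic_green w T h has_real_derivative ((- w * ?U t + c * h t) + (w * ?V t - c * h t)) / (2 * w * c)) (at t)"
    unfolding green by (intro DERIV_cdivide DERIV_add dU dV)
  moreover have "((- w * ?U t + c * h t) + (w * ?V t - c * h t)) / (2 * w * c) = periodic_green_deriv w T h t"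
    using w_pos c by (simp add: green_deriv field_simps)
  ultimately show "(periodic_green w T h has_real_derivative periodic_green_deriv w T h t) (at t)"
    by simp
  have "(periodic_green_deriv w T h has_real_derivative ((w * ?V t - c * h t) - (- w * ?U t + c * h t)) / (2 * c)) (at t)"
    unfolding green_deriv by (intro DERIV_cdivide DERIV_diff dU dV)
  moreover have "((w * ?V t - c * h t) - (- w * ?U t + c * h t)) / (2 * c) = w\<^sup>2 * periodic_green w T h t - h t"
    using w_pos c by (simp add: green field_simps power2_eq_square)
  ultimately show "(periodic_green_deriv w T h has_real_derivative (w\<^sup>2 * periodic_green w T h t - h t)) (at t)"
    by simp
qed

lemma periodic_green_periodic:
  assumes "\<And>t. h (t + T) = h t"
  shows "periodic_green w T h (t + T) = periodic_green w T h t"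
proof -
  have "exp_window w T (\<lambda>u. h (- u)) (- (t + T) + T) = exp_window w T (\<lambda>u. h (- u)) (- (t + T))"
    by (rule exp_window_periodic) (simp add: periodic_reflect[of h T, OF assms])
  then show ?thesis
    by (simp add: periodic_green_def exp_window_periodic[of h, OF assms])
qed

lemma periodic_green_mono:
  assumes "continuous_on UNIV h" "continuous_on UNIV g" "\<And>u. h u \<le> g u"
  shows "periodic_green w T h t \<le> periodic_green w T g t"
  unfolding periodic_green_def using w_pos T_pos
  by (intro divide_right_mono add_mono exp_window_mono assms continuous_on_reflect) auto

lemma periodic_green_const: "periodic_green w T (\<lambda>_. a) t = a / w\<^sup>2"
proof -
  have "1 - exp (- w * T) > 0"
    using w_pos T_pos by simp
  then show ?thesis
    using w_pos T_pos by (simp add: periodic_green_def exp_window_const field_simps power2_eq_square)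
qed

lemma abs_periodic_green_deriv_le:
  assumes h: "continuous_on UNIV h" and H: "\<And>u. \<bar>h u\<bar> \<le> H"
  shows "\<bar>periodic_green_deriv w T h t\<bar> \<le> H / w"
proof -
  define c where "c = 1 - exp (- w * T)"
  have c: "c > 0"
    using w_pos T_pos by (simp add: c_def)
  have window_bound: "\<bar>exp_window w T g s\<bar> \<le> H * c / w"
    if "continuous_on UNIV g" "\<And>u. \<bar>g u\<bar> \<le> H" for g s
  proof -
    have "- H \<le> g u" "g u \<le> H" for u
      using that(2)[of u] by auto
    then have "exp_window w T (\<lambda>_. - H) s \<le> exp_window w T g s" "exp_window w T g s \<le> exp_window w T (\<lambda>_. H) s"
      using that(1) by (auto intro!: exp_window_mono)
    then show ?thesis
      using w_pos T_pos by (simp add: exp_window_const c_def abs_le_iff)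
  qed
  have "\<bar>exp_window w T (\<lambda>u. h (- u)) (- t) - exp_window w T h t\<bar> \<le> 2 * (H * c / w)"
    using window_bound[OF h H, of t] window_bound[OF continuous_on_reflect[OF h] H, of "- t"]
    unfolding abs_le_iff by linarith
  then have "\<bar>exp_window w T (\<lambda>u. h (- u)) (- t) - exp_window w T h t\<bar> / (2 * c) \<le> 2 * (H * c / w) / (2 * c)"
    using c by (intro divide_right_mono) auto
  also have "\<dots> = H / w"
    using c by simp
  finally show ?thesis
    using c unfolding periodic_green_deriv_def c_def[symmetric] by (simp add: abs_divide)
qed

lemma lipschitz_on_periodic_green:
  assumes h: "continuous_on UNIV h" and per: "\<And>t. h (t + T) = h t"
    and H: "\<And>u. \<bar>h u\<bar> \<le> H"
  shows "(H / w)-lipschitz_on UNIV (periodic_green w T h)"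
proof (rule lipschitz_onI)
  have mvt: "\<bar>periodic_green w T h y - periodic_green w T h x\<bar> \<le> H / w * (y - x)" if xy: "x < y" for x y
  proof -
    obtain z where "periodic_green w T h y - periodic_green w T h x = (y - x) * periodic_green_deriv w T h z"
      using MVT2[OF xy has_real_derivative_periodic_green(1)[OF h per]] by blast
    then have "\<bar>periodic_green w T h y - periodic_green w T h x\<bar> = (y - x) * \<bar>periodic_green_deriv w T h z\<bar>"
      using xy by (simp add: abs_mult)
    also have "\<dots> \<le> (y - x) * (H / w)"
      using abs_periodic_green_deriv_le[OF h H, of z] xy by (intro mult_left_mono) auto
    finally show ?thesis
      by (simp add: mult.commute)
  qed
  show "dist (periodic_green w T h x) (periodic_green w T h y) \<le> H / w * dist x y" for x y
  proof (cases x y rule: linorder_cases)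
    case less
    then show ?thesis
      using mvt[OF less] by (simp add: dist_real_def abs_minus_commute)
  next
    case greater
    then show ?thesis
      using mvt[OF greater] by (simp add: dist_real_def)
  qed simp
  show "H / w \<ge> 0"
    using H[of 0] w_pos by simp
qed

lemma tendsto_periodic_green:
  assumes "\<And>n. continuous_on UNIV (h n)" and "\<And>n u. \<bar>h n u\<bar> \<le> H"
    and "\<And>u. (\<lambda>n. h n u) \<longlonglongrightarrow> g u"
  shows "(\<lambda>n. periodic_green w T (h n) t) \<longlonglongrightarrow> periodic_green w T g t"
  unfolding periodic_green_def
  by (intro tendsto_divide tendsto_add tendsto_exp_window tendsto_const assms continuous_on_reflect)
     (use w_pos T_pos in \<open>auto intro: assms(2)\<close>)

end

section \<open>Monotone iteration between constant lower and upper solutions\<close>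

lemma lipschitz_on_pointwise_limit:
  assumes "\<And>n. L-lipschitz_on S (f n)" and "\<And>x. x \<in> S \<Longrightarrow> (\<lambda>n. f n x) \<longlonglongrightarrow> g x"
  shows "L-lipschitz_on S g"
proof (rule lipschitz_onI)
  show "dist (g x) (g y) \<le> L * dist x y" if "x \<in> S" "y \<in> S" for x y
    by (rule LIMSEQ_le_const2[OF tendsto_dist[OF assms(2) assms(2)]])
       (use that assms(1) in \<open>auto dest: lipschitz_onD\<close>)
  show "0 \<le> L"
    using assms(1) lipschitz_on_nonneg by blast
qed

locale periodic_monotone_iteration =
  fixes w T :: real and F :: "real \<Rightarrow> real \<Rightarrow> real" and \<alpha> \<beta> H :: real
  assumes w_pos: "0 < w" and T_pos: "0 < T"
    and F_continuous: "continuous_on UNIV (\<lambda>(t, y). F t y)"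
    and F_periodic: "\<And>t y. F (t + T) y = F t y"
    and F_mono: "\<And>t y z. \<alpha> \<le> y \<Longrightarrow> y \<le> z \<Longrightarrow> z \<le> \<beta> \<Longrightarrow> F t y \<le> F t z"
    and F_bounded: "\<And>t y. \<alpha> \<le> y \<Longrightarrow> y \<le> \<beta> \<Longrightarrow> \<bar>F t y\<bar> \<le> H"
    and lower_solution: "\<And>t. w\<^sup>2 * \<alpha> \<le> F t \<alpha>"
    and upper_solution: "\<And>t. F t \<beta> \<le> w\<^sup>2 * \<beta>"
    and lower_le_upper: "\<alpha> \<le> \<beta>"
begin

definition admissible :: "(real \<Rightarrow> real) \<Rightarrow> bool" where
  "admissible x \<longleftrightarrow> continuous_on UNIV x \<and> (\<forall>t. x (t + T) = x t) \<and> (\<forall>t. \<alpha> \<le> x t \<and> x t \<le> \<beta>)"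

definition iteration :: "(real \<Rightarrow> real) \<Rightarrow> real \<Rightarrow> real" where
  "iteration x = periodic_green w T (\<lambda>t. F t (x t))"

lemma continuous_on_F:
  assumes "continuous_on UNIV a" "continuous_on UNIV b"
  shows "continuous_on UNIV (\<lambda>s. F (a s) (b s))"
proof -
  have "continuous_on UNIV (\<lambda>s. (a s, b s))"
    by (intro continuous_on_Pair assms)
  then show ?thesis
    using continuous_on_compose2[OF F_continuous, where f="\<lambda>s. (a s, b s)" and s=UNIV] by simp
qed

lemma continuous_on_F_comp: "continuous_on UNIV x \<Longrightarrow> continuous_on UNIV (\<lambda>t. F t (x t))"
  by (rule continuous_on_F[OF continuous_on_id])

lemma admissible_const: "\<alpha> \<le> c \<Longrightarrow> c \<le> \<beta> \<Longrightarrow> admissible (\<lambda>_. c)"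
  by (simp add: admissible_def)

lemma iteration_mono:
  assumes "admissible x" "admissible y" "\<And>t. x t \<le> y t"
  shows "iteration x t \<le> iteration y t"
  using assms unfolding iteration_def admissible_def
  by (intro periodic_green_mono w_pos T_pos continuous_on_F_comp F_mono) auto

lemma lower_le_iteration_lower: "\<alpha> \<le> iteration (\<lambda>_. \<alpha>) t"
proof -
  have "periodic_green w T (\<lambda>_. w\<^sup>2 * \<alpha>) t \<le> iteration (\<lambda>_. \<alpha>) t"
    unfolding iteration_def
    by (intro periodic_green_mono w_pos T_pos continuous_on_F_comp lower_solution) auto
  then show ?thesis
    using w_pos T_pos by (simp add: periodic_green_const)
qed

lemma iteration_upper_le_upper: "iteration (\<lambda>_. \<beta>) t \<le> \<beta>"
proof -
  have "iteration (\<lambda>_. \<beta>) t \<le> periodic_green w T (\<lambda>_. w\<^sup>2 * \<beta>) t"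
    unfolding iteration_def
    by (intro periodic_green_mono w_pos T_pos continuous_on_F_comp upper_solution) auto
  then show ?thesis
    using w_pos T_pos by (simp add: periodic_green_const)
qed

lemma lipschitz_on_iteration:
  assumes "admissible x"
  shows "(H / w)-lipschitz_on UNIV (iteration x)"
  using assms unfolding iteration_def admissible_def
  by (intro lipschitz_on_periodic_green w_pos T_pos continuous_on_F_comp F_bounded)
     (auto simp: F_periodic)

lemma admissible_iteration:
  assumes x: "admissible x"
  shows "admissible (iteration x)"
proof -
  have "continuous_on UNIV (iteration x)"
    using lipschitz_on_iteration[OF x] by (rule lipschitz_on_continuous_on)
  moreover have "iteration x (t + T) = iteration x t" for t
    using x unfolding iteration_def admissible_def
    by (intro periodic_green_periodic w_pos T_pos) (simp add: F_periodic)
  moreover have "\<alpha> \<le> iteration x t" "iteration x t \<le> \<beta>" for t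
    using lower_le_iteration_lower[of t] iteration_upper_le_upper[of t]
      iteration_mono[of "\<lambda>_. \<alpha>" x t] iteration_mono[of x "\<lambda>_. \<beta>" t]
      x admissible_const lower_le_upper
    unfolding admissible_def by auto
  ultimately show ?thesis
    unfolding admissible_def by blast
qed

definition approx :: "nat \<Rightarrow> real \<Rightarrow> real" where
  "approx n = (iteration ^^ n) (\<lambda>_. \<alpha>)"

lemma approx_0 [simp]: "approx 0 = (\<lambda>_. \<alpha>)"
  and approx_Suc [simp]: "approx (Suc n) = iteration (approx n)"
  by (simp_all add: approx_def)

lemma admissible_approx: "admissible (approx n)"
  by (induction n) (simp_all add: admissible_const lower_le_upper admissible_iteration)

lemma approx_le_Suc: "approx n t \<le> approx (Suc n) t"
proof (induction n arbitrary: t)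
  case 0
  show ?case
    by (simp add: lower_le_iteration_lower)
next
  case (Suc n)
  show ?case
    using iteration_mono[OF admissible_approx admissible_approx Suc.IH] by simp
qed

definition lim_approx :: "real \<Rightarrow> real" where
  "lim_approx t = lim (\<lambda>n. approx n t)"

lemma approx_tendsto: "(\<lambda>n. approx n t) \<longlonglongrightarrow> lim_approx t"
proof -
  have "incseq (\<lambda>n. approx n t)"
    by (rule incseq_SucI) (rule approx_le_Suc)
  moreover have "approx n t \<le> \<beta>" for n
    using admissible_approx[of n] by (simp add: admissible_def)
  ultimately obtain L where "(\<lambda>n. approx n t) \<longlonglongrightarrow> L"
    using incseq_convergent by blast
  then show ?thesis
    unfolding lim_approx_def by (simp add: limI)
qed

lemma iteration_approx_tendsto: "(\<lambda>n. iteration (approx n) t) \<longlonglongrightarrow> lim_approx t"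
  using LIMSEQ_Suc[OF approx_tendsto[of t]] by simp

lemma admissible_lim_approx: "admissible lim_approx"
proof -
  have "(H / w)-lipschitz_on UNIV lim_approx"
    by (rule lipschitz_on_pointwise_limit[OF lipschitz_on_iteration[OF admissible_approx] iteration_approx_tendsto])
  then have "continuous_on UNIV lim_approx"
    by (rule lipschitz_on_continuous_on)
  moreover have "lim_approx (t + T) = lim_approx t" for t
    using approx_tendsto[of "t + T"] approx_tendsto[of t] admissible_approx
    by (simp add: admissible_def LIMSEQ_unique)
  moreover have "\<alpha> \<le> lim_approx t" "lim_approx t \<le> \<beta>" for t
    using admissible_approx
    by (auto simp: admissible_def intro: LIMSEQ_le_const[OF approx_tendsto] LIMSEQ_le_const2[OF approx_tendsto])
  ultimately show ?thesis
    unfolding admissible_def by blast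
qed

lemma iteration_lim_approx: "iteration lim_approx = lim_approx"
proof
  fix t
  have "(\<lambda>n. F u (approx n u)) \<longlonglongrightarrow> F u (lim_approx u)" for u
    using continuous_on_F[OF continuous_on_const continuous_on_id, of u]
    by (auto intro: continuous_on_tendsto_compose[OF _ approx_tendsto])
  then have "(\<lambda>n. iteration (approx n) t) \<longlonglongrightarrow> iteration lim_approx t"
    unfolding iteration_def using admissible_approx admissible_lim_approx
    by (intro tendsto_periodic_green[where H=H] w_pos T_pos continuous_on_F_comp F_bounded)
       (auto simp: admissible_def)
  then show "iteration lim_approx t = lim_approx t"
    using iteration_approx_tendsto by (rule LIMSEQ_unique)
qed

lemma periodic_solution_between:
  "\<exists>x x'. (\<forall>t. (x has_real_derivative x' t) (at t)) \<and>
     (\<forall>t. (x' has_real_derivative (w\<^sup>2 * x t - F t (x t))) (at t)) \<and>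
     (\<forall>t. x (t + T) = x t) \<and> (\<forall>t. \<alpha> \<le> x t \<and> x t \<le> \<beta>)"
proof -
  let ?h = "\<lambda>t. F t (lim_approx t)"
  have h: "continuous_on UNIV ?h" and per: "\<And>t. ?h (t + T) = ?h t"
    using admissible_lim_approx by (auto simp: admissible_def continuous_on_F_comp F_periodic)
  have "periodic_green w T ?h = lim_approx"
    using iteration_lim_approx by (simp add: iteration_def)
  then show ?thesis
    using has_real_derivative_periodic_green[OF w_pos T_pos h per] admissible_lim_approx
    by (intro exI[of _ lim_approx] exI[of _ "periodic_green_deriv w T ?h"]) (auto simp: admissible_def)
qed

end

section \<open>The pendulum with moving pivot\<close>

lemma bounded_periodic:
  fixes f :: "real \<Rightarrow> real"
  assumes f: "continuous_on UNIV f" and T: "T > 0" and per: "\<And>t. f (t + T) = f t"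
  obtains B where "\<And>t. \<bar>f t\<bar> \<le> B"
proof -
  interpret periodic_fun_simple f T
    by standard (rule per)
  have "bounded (f ` {0..T})"
    by (intro compact_imp_bounded compact_continuous_image continuous_on_subset[OF f]) auto
  then obtain B where B: "\<forall>s\<in>{0..T}. \<bar>f s\<bar> \<le> B"
    unfolding bounded_iff by auto
  have "\<bar>f t\<bar> \<le> B" for t
  proof -
    define s where "s = t - of_int \<lfloor>t / T\<rfloor> * T"
    have "s \<in> {0..T}"
      using floor_divide_lower[OF T, of t] floor_divide_upper[OF T, of t]
      by (auto simp: s_def algebra_simps)
    moreover have "f t = f s"
      using plus_of_int[of s "\<lfloor>t / T\<rfloor>"] by (simp add: s_def)
    ultimately show ?thesis
      using B by simp
  qed
  then show thesis
    by (rule that)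
qed

lemma abs_mult_sin_arctan_le_cos_arctan:
  fixes a c :: real
  assumes "\<bar>c * a\<bar> \<le> 1"
  shows "\<bar>c * sin (arctan a)\<bar> \<le> cos (arctan a)"
  using assms by (simp add: sin_arctan cos_arctan abs_mult divide_right_mono)

lemma pendulum_nonlinearity_mono:
  fixes c M y z :: real
  assumes "\<bar>c\<bar> + 1 \<le> M" and "y \<le> z"
  shows "M * y - (c * sin y - cos y) \<le> M * z - (c * sin z - cos z)"
proof (rule DERIV_nonneg_imp_nondecreasing[OF assms(2)])
  fix u
  have "((\<lambda>y. M * y - (c * sin y - cos y)) has_real_derivative M - (c * cos u + sin u)) (at u)"
    by (auto intro!: derivative_eq_intros)
  moreover have "c * cos u \<le> \<bar>c\<bar> * \<bar>cos u\<bar>"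
    by (metis abs_ge_self abs_mult)
  moreover have "\<bar>c\<bar> * \<bar>cos u\<bar> \<le> \<bar>c\<bar>"
    by (simp add: mult_left_le)
  moreover have "sin u \<le> 1"
    by simp
  ultimately show "\<exists>d. ((\<lambda>y. M * y - (c * sin y - cos y)) has_real_derivative d) (at u) \<and> 0 \<le> d"
    using assms(1) by (metis diff_ge_0_iff_ge add_mono order_trans)
qed

lemma pendulum_periodic_monotone_iteration:
  fixes f :: "real \<Rightarrow> real"
  assumes T: "T > 0" and f: "continuous_on UNIV f" and per: "\<And>t. f (t + T) = f t"
    and B: "\<And>t. \<bar>f t\<bar> \<le> B"
  shows "periodic_monotone_iteration (B + 2) T (\<lambda>t y. (B + 2)\<^sup>2 * y - (f t * sin y - cos y))
           (arctan (1 / (B + 1))) (pi - arctan (1 / (B + 1))) ((B + 2)\<^sup>2 * pi + B + 1)"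
proof -
  define \<epsilon> where "\<epsilon> = arctan (1 / (B + 1))"
  have B_nonneg: "0 \<le> B"
    using B[of 0] by linarith
  have \<epsilon>: "0 < \<epsilon>" "\<epsilon> < pi / 2"
    using B_nonneg arctan_ubound[of "1 / (B + 1)"] by (simp_all add: \<epsilon>_def)
  have margin: "\<bar>f t * sin \<epsilon>\<bar> \<le> cos \<epsilon>" for t
    unfolding \<epsilon>_def
    by (rule abs_mult_sin_arctan_le_cos_arctan) (use B[of t] B_nonneg in \<open>simp add: abs_mult\<close>)
  have "B + 2 \<le> (B + 2)\<^sup>2"
    using mult_left_mono[of 1 "B + 2" "B + 2"] B_nonneg by (simp add: power2_eq_square)
  then have M: "\<bar>f t\<bar> + 1 \<le> (B + 2)\<^sup>2" for t
    using B[of t] by linarith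
  show ?thesis
    unfolding \<epsilon>_def[symmetric]
  proof unfold_locales
    show "continuous_on UNIV (\<lambda>(t, y). (B + 2)\<^sup>2 * y - (f t * sin y - cos y))"
      unfolding case_prod_beta
      by (intro continuous_intros continuous_on_compose2[OF f]) auto
    show "(B + 2)\<^sup>2 * y - (f t * sin y - cos y) \<le> (B + 2)\<^sup>2 * z - (f t * sin z - cos z)"
      if "y \<le> z" for t y z
      using pendulum_nonlinearity_mono[OF M that] .
    show "\<bar>(B + 2)\<^sup>2 * y - (f t * sin y - cos y)\<bar> \<le> (B + 2)\<^sup>2 * pi + B + 1"
      if "\<epsilon> \<le> y" "y \<le> pi - \<epsilon>" for t y
    proof -
      have "0 \<le> y" "y \<le> pi"
        using that \<epsilon> by linarith+
      then have "\<bar>(B + 2)\<^sup>2 * y\<bar> \<le> (B + 2)\<^sup>2 * pi"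
        by (simp add: abs_mult mult_left_mono)
      moreover have "\<bar>f t\<bar> * \<bar>sin y\<bar> \<le> \<bar>f t\<bar>"
        by (simp add: mult_left_le)
      then have "\<bar>f t * sin y\<bar> \<le> B"
        using B[of t] by (simp add: abs_mult)
      moreover have "\<bar>cos y\<bar> \<le> 1"
        by simp
      ultimately show ?thesis
        by linarith
    qed
    show "(B + 2)\<^sup>2 * \<epsilon> \<le> (B + 2)\<^sup>2 * \<epsilon> - (f t * sin \<epsilon> - cos \<epsilon>)" for t
      using margin[of t] by linarith
    show "(B + 2)\<^sup>2 * (pi - \<epsilon>) - (f t * sin (pi - \<epsilon>) - cos (pi - \<epsilon>)) \<le> (B + 2)\<^sup>2 * (pi - \<epsilon>)" for t
      using margin[of t] by simp
  qed (use T per B_nonneg \<epsilon> in auto)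
qed

theorem lemma3p6:
  fixes f :: "real \<Rightarrow> real" and T :: real
  assumes "T > 0"
    and "smooth_fun f"
    and "\<forall>t. f (t + T) = f t"
  shows "\<exists>x x' :: real \<Rightarrow> real.
           (\<forall>t. (x has_real_derivative x' t) (at t)) \<and>
           (\<forall>t. (x' has_real_derivative (f t * sin (x t) - cos (x t))) (at t)) \<and>
           (\<forall>t. x (t + T) = x t) \<and>
           (\<forall>t. 0 < x t \<and> x t < pi)"
proof -
  have f: "continuous_on UNIV f"
    using assms(2) unfolding smooth_fun_def
    by (metis funpow_0 continuous_at_imp_continuous_on differentiable_imp_continuous_within)
  obtain B where B: "\<And>t. \<bar>f t\<bar> \<le> B"
    using bounded_periodic[OF f assms(1)] assms(3) by blast
  define \<epsilon> where "\<epsilon> = arctan (1 / (B + 1))"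
  interpret periodic_monotone_iteration "B + 2" T "\<lambda>t y. (B + 2)\<^sup>2 * y - (f t * sin y - cos y)"
      \<epsilon> "pi - \<epsilon>" "(B + 2)\<^sup>2 * pi + B + 1"
    unfolding \<epsilon>_def using pendulum_periodic_monotone_iteration[OF assms(1) f _ B] assms(3) by blast
  obtain x x' where solution: "\<forall>t. (x has_real_derivative x' t) (at t)"
      "\<forall>t. (x' has_real_derivative (f t * sin (x t) - cos (x t))) (at t)" "\<forall>t. x (t + T) = x t"
    and bounds: "\<forall>t. \<epsilon> \<le> x t \<and> x t \<le> pi - \<epsilon>"
    using periodic_solution_between by auto
  have "0 < \<epsilon>"
    using B[of 0] by (simp add: \<epsilon>_def)
  then have "0 < x t \<and> x t < pi" for t
    using bounds[rule_format, of t] by linarith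
  then show ?thesis
    using solution by blast
qed

end
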